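(* Assume (A.1) and (A.2). Let $\mathcal F_{co}^+$, $U_{\mathbb V}$, $(p^*_{co},q^*_{co})$ and the lines $\mathbb L_1,\dots,\mathbb L_4$ be as in the context. (i) If $(p^*_{co},q^*_{co})$ lies in the interior of $\mathcal F^+_{co}$, then $$\max_{(p,q)\in\mathcal F^+_{co}} U_{\mathbb V}(p,q)=U_{\mathbb V}(p^*_{co},q^*_{co}).$$ (ii) If $(p^*_{co},q^*_{co})$ does not lie in the interior of $\mathcal F^+_{co}$, then the maximum of $U_{\mathbb V}$ over $\mathcal F^+_{co}$ is attained on one of the non-empty boundary pieces other than the lines $\{q=0\}$ and $\{p=0\}$: $$\max_{(p,q)\in\mathcal F^+_{co}} U_{\mathbb V}(p,q)=\max_{l\in\{1,2,3,4\}}\Big\{\max_{(p,q)\in\mathcal F^+_{co}\cap\mathbb L_l} U_{\mathbb V}(p,q)\Big\},$$ where by convention the maximum over an empty set is $0$.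
   Context: Model (a Stackelberg pricing game). Parameters: market potentials $\bar d_i,\bar d_j>0$; price sensitivities $\alpha_i,\alpha_j>0$; substitutability $\varepsilon\in(0,1]$; per-unit production costs $C_i,C_j\ge0$, per-unit raw-material cost $C_S\ge0$; operating costs $O_i,O_j,O_S\ge 0$. A coalition $\mathbb V$ (supplier plus in-house manufacturer $M_i$) quotes a consumer price $p$ and a wholesale price $q$; the out-house manufacturer $M_j$ then quotes a consumer price $\tilde p$. Demands: $D_i=(\bar d_i-\alpha_i p+\varepsilon\alpha_j\tilde p)^+$, $D_j=(\bar d_j-\alpha_j\tilde p+\varepsilon\alpha_i p)^+$. Maximal prices: $p_{mx}=(\bar d_i+\varepsilon\bar d_j)/\alpha_i$, $\tilde p_{mx}=(\bar d_j+\varepsilon\bar d_i)/\alpha_j$. Let $p_{sw}=\bar d_i/\alpha_i+\sqrt{\alpha_jO_j}/(\varepsilon\alpha_i)$ and $$\theta(p)=\begin{cases}\dfrac{\bar d_j+\varepsilon\alpha_ip-\alpha_jC_j-2\sqrt{\alpha_jO_j}}{\alpha_j}, & p<p_{sw},\\[2mm] \dfrac{\bar d_j+\varepsilon\bar d_i-\alpha_jC_j}{\alpha_j}-\dfrac{\alpha_jO_j}{\alpha_j(\varepsilon\alpha_ip-\varepsilon\bar d_i)}, & p\ge p_{sw}.\end{cases}$$ When $q\le\theta(p)$, $M_j$'s best response is $\tilde p^*(p,q)=\min\{(\bar d_j+\varepsilon\alpha_ip)/(2\alpha_j)+(C_j+q)/2,\ \tilde p_{mx}\}$ (when $q>\theta(p)$,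 $M_j$ does not operate). Co-existence region: $\mathcal F_{co}=\{(p,q)\in(0,\infty)^2: q\le\theta(p)\}$. For $(p,q)\in\mathcal F_{co}$ the coalition's utility is $$U_{\mathbb V}(p,q)=(\bar d_i-\alpha_ip+\varepsilon\alpha_j\tilde p^*(p,q))^+(p-C_i-C_S)+(\bar d_j+\varepsilon\alpha_ip-\alpha_j\tilde p^*(p,q))^+(q-C_S)-O_i-O_S.$$ Unconstrained function: $U(p,q)$ is the same expression with $(\cdot)^+$ removed and $\tilde p^*(p,q)$ replaced by $(\bar d_j+\varepsilon\alpha_ip)/(2\alpha_j)+(C_j+q)/2$; equivalently $U(p,q)=w_1p^2+w_2pq+w_3q^2+w_4p+w_5q+w_6$ with $w_1=-\alpha_i(1-\varepsilon^2/2)$, $w_2=\varepsilon(\alpha_i+\alpha_j)/2$, $w_3=-\alpha_j/2$, $w_4=\tfrac12\big(2\bar d_i+\varepsilon\bar d_j+\varepsilon\alpha_jC_j-\varepsilon\alpha_iC_S+2\alpha_i(1-\varepsilon^2/2)(C_i+C_S)\big)$, $w_5=-\varepsilon\alpha_j(C_i+C_S)/2+(\bar d_j-\alpha_jC_j+\alpha_jC_S)/2$, and $w_6$ a constant. Its critical point is $p^*_{co}=-(2w_3w_4-w_2w_5)/(4w_1w_3-w_2^2)$, $q^*_{co}=-(w_2p^*_{co}+w_5)/(2w_3)$. Define $\phi(p)=(\bar d_j+2\varepsilon\bar d_i-\varepsilon\alpha_ip-\alpha_jC_j)/\alpha_j$ and $\psi(q)=\big(2\bar d_i+\varepsilon\bar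 d_j+\varepsilon\alpha_j(C_j+q)\big)/((2-\varepsilon^2)\alpha_i)$. Then $$\mathcal F^+_{co}=\{(p,q)\in[0,\infty)^2: p\le\min\{p_{mx},\psi(q)\},\ q\le\min\{\theta(p),\phi(p)\}\},$$ the region where both manufacturers have positive demand and $M_j$'s price is unsaturated. Lines: $\mathbb L_1=\{q=\phi(p)\}$, $\mathbb L_2=\{p=\psi(q)\}$, $\mathbb L_3=\{q=(\bar d_j+\varepsilon\alpha_ip-\alpha_jC_j-2\sqrt{\alpha_jO_j})/\alpha_j\}$, $\mathbb L_4=\{p=p_{mx}\}$. Assumption (A.1): $\bar d_i\ge\alpha_i(C_S+C_i)+2\sqrt{\alpha_i(O_S+O_i)}$ and $\bar d_j\ge\alpha_j(C_S+C_j)+2\max\{\sqrt{2\alpha_j(O_S+O_i)},\sqrt{\alpha_jO_j}\}$. Assumption (A.2): $\varepsilon\le 2\sqrt{\alpha_jO_j}/(\alpha_jC_i)$. *)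

theory Defs
  imports "HOL-Analysis.Analysis"
begin

text \<open>Parameters, always passed in the order
  di dj ai aj eps Ci Cj CS Oi Oj OS
  (market potentials, price sensitivities, substitutability, production costs,
   raw-material cost, operating costs).\<close>

definition pos_part :: "real \<Rightarrow> real" where
  "pos_part x = max x 0"

definition p_mx :: "real \<Rightarrow> real \<Rightarrow> real \<Rightarrow> real \<Rightarrow> real \<Rightarrow> real" where
  "p_mx di dj ai aj eps = (di + eps * dj) / ai"

definition pt_mx :: "real \<Rightarrow> real \<Rightarrow> real \<Rightarrow> real \<Rightarrow> real \<Rightarrow> real" where
  "pt_mx di dj ai aj eps = (dj + eps * di) / aj"

definition p_sw :: "real \<Rightarrow> real \<Rightarrow> real \<Rightarrow> real \<Rightarrow> real \<Rightarrow> real" where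
  "p_sw di ai aj eps Oj = di / ai + sqrt (aj * Oj) / (eps * ai)"

definition theta :: "real \<Rightarrow> real \<Rightarrow> real \<Rightarrow> real \<Rightarrow> real \<Rightarrow> real \<Rightarrow> real \<Rightarrow> real \<Rightarrow> real" where
  "theta di dj ai aj eps Cj Oj p =
     (if p < p_sw di ai aj eps Oj
      then (dj + eps * ai * p - aj * Cj - 2 * sqrt (aj * Oj)) / aj
      else (dj + eps * di - aj * Cj) / aj - (aj * Oj) / (aj * (eps * ai * p - eps * di)))"

definition phi :: "real \<Rightarrow> real \<Rightarrow> real \<Rightarrow> real \<Rightarrow> real \<Rightarrow> real \<Rightarrow> real \<Rightarrow> real" where
  "phi di dj ai aj eps Cj p = (dj + 2 * eps * di - eps * ai * p - aj * Cj) / aj"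

definition psi :: "real \<Rightarrow> real \<Rightarrow> real \<Rightarrow> real \<Rightarrow> real \<Rightarrow> real \<Rightarrow> real \<Rightarrow> real" where
  "psi di dj ai aj eps Cj q = (2 * di + eps * dj + eps * aj * (Cj + q)) / ((2 - eps^2) * ai)"

text \<open>Best response of the out-house manufacturer M_j (valid when q \<le> theta p).\<close>
definition pt_star :: "real \<Rightarrow> real \<Rightarrow> real \<Rightarrow> real \<Rightarrow> real \<Rightarrow> real \<Rightarrow> real \<Rightarrow> real \<Rightarrow> real" where
  "pt_star di dj ai aj eps Cj p q =
     min ((dj + eps * ai * p) / (2 * aj) + (Cj + q) / 2) (pt_mx di dj ai aj eps)"

definition UV :: "real \<Rightarrow> real \<Rightarrow> real \<Rightarrow> real \<Rightarrow> real \<Rightarrow> real \<Rightarrow> real \<Rightarrow> real \<Rightarrow> real \<Rightarrow> real \<Rightarrow> real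
                  \<Rightarrow> real \<times> real \<Rightarrow> real" where
  "UV di dj ai aj eps Ci Cj CS Oi Oj OS z =
     (let p = fst z; q = snd z; pt = pt_star di dj ai aj eps Cj p q in
      pos_part (di - ai * p + eps * aj * pt) * (p - Ci - CS)
      + pos_part (dj + eps * ai * p - aj * pt) * (q - CS) - Oi - OS)"

definition w1 :: "real \<Rightarrow> real \<Rightarrow> real" where
  "w1 ai eps = - ai * (1 - eps^2 / 2)"
definition w2 :: "real \<Rightarrow> real \<Rightarrow> real \<Rightarrow> real" where
  "w2 ai aj eps = eps * (ai + aj) / 2"
definition w3 :: "real \<Rightarrow> real" where
  "w3 aj = - aj / 2"
definition w4 :: "real \<Rightarrow> real \<Rightarrow> real \<Rightarrow> real \<Rightarrow> real \<Rightarrow> real \<Rightarrow> real \<Rightarrow> real \<Rightarrow> real" where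
  "w4 di dj ai aj eps Ci Cj CS =
     (2 * di + eps * dj + eps * aj * Cj - eps * ai * CS + 2 * ai * (1 - eps^2 / 2) * (Ci + CS)) / 2"
definition w5 :: "real \<Rightarrow> real \<Rightarrow> real \<Rightarrow> real \<Rightarrow> real \<Rightarrow> real \<Rightarrow> real" where
  "w5 dj aj eps Ci Cj CS = - eps * aj * (Ci + CS) / 2 + (dj - aj * Cj + aj * CS) / 2"

definition p_co :: "real \<Rightarrow> real \<Rightarrow> real \<Rightarrow> real \<Rightarrow> real \<Rightarrow> real \<Rightarrow> real \<Rightarrow> real \<Rightarrow> real" where
  "p_co di dj ai aj eps Ci Cj CS =
     - (2 * w3 aj * w4 di dj ai aj eps Ci Cj CS - w2 ai aj eps * w5 dj aj eps Ci Cj CS)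
       / (4 * w1 ai eps * w3 aj - (w2 ai aj eps)^2)"

definition q_co :: "real \<Rightarrow> real \<Rightarrow> real \<Rightarrow> real \<Rightarrow> real \<Rightarrow> real \<Rightarrow> real \<Rightarrow> real \<Rightarrow> real" where
  "q_co di dj ai aj eps Ci Cj CS =
     - (w2 ai aj eps * p_co di dj ai aj eps Ci Cj CS + w5 dj aj eps Ci Cj CS) / (2 * w3 aj)"

definition Fco_plus :: "real \<Rightarrow> real \<Rightarrow> real \<Rightarrow> real \<Rightarrow> real \<Rightarrow> real \<Rightarrow> real \<Rightarrow> (real \<times> real) set" where
  "Fco_plus di dj ai aj eps Cj Oj =
     {(p, q). 0 \<le> p \<and> 0 \<le> q
        \<and> p \<le> min (p_mx di dj ai aj eps) (psi di dj ai aj eps Cj q)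
        \<and> q \<le> min (theta di dj ai aj eps Cj Oj p) (phi di dj ai aj eps Cj p)}"

definition Line :: "real \<Rightarrow> real \<Rightarrow> real \<Rightarrow> real \<Rightarrow> real \<Rightarrow> real \<Rightarrow> real \<Rightarrow> nat \<Rightarrow> (real \<times> real) set" where
  "Line di dj ai aj eps Cj Oj l =
     (if l = 1 then {(p, q). q = phi di dj ai aj eps Cj p}
      else if l = 2 then {(p, q). p = psi di dj ai aj eps Cj q}
      else if l = 3 then {(p, q). q = (dj + eps * ai * p - aj * Cj - 2 * sqrt (aj * Oj)) / aj}
      else if l = 4 then {(p, q). p = p_mx di dj ai aj eps}
      else {})"

definition max0 :: "('a \<Rightarrow> real) \<Rightarrow> 'a set \<Rightarrow> real" where
  "max0 f S = (if S = {} then 0 else Sup (f ` S))"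

end

theory Submission
  imports Defs
begin

text \<open>On F_co^+ the best response of M_j is unsaturated and both demands are nonnegative, so U_V
  coincides there with the quadratic U = w1 p^2 + w2 p q + w3 q^2 + w4 p + w5 q + w6, where
  w1, w3 < 0 < w2, w4 and w5 >= 0. A critical point satisfies D p = -(2 w3 w4 - w2 w5) > 0 with
  D = 4 w1 w3 - w2^2. Hence if (p*_co, q*_co) is interior, then p*_co > 0 forces D > 0, U is concave
  and the critical point is the maximiser. Otherwise F_co^+ is compact and carries a maximiser;
  off the lines L_1, ..., L_4 it would maximise U relative to the quadrant, where the gradient
  cannot vanish on the axes, so it would be an interior critical point, i.e. (p*_co, q*_co).\<close>

section \<open>Quadratic functions of two variables\<close>

definition quad_fun :: "real \<Rightarrow> real \<Rightarrow> real \<Rightarrow> real \<Rightarrow> real \<Rightarrow> real \<Rightarrow> real \<times> real \<Rightarrow> real" where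
  "quad_fun a b c d e f z =
     a * fst z ^ 2 + b * fst z * snd z + c * snd z ^ 2 + d * fst z + e * snd z + f"

definition quad_grad_p :: "real \<Rightarrow> real \<Rightarrow> real \<Rightarrow> real \<times> real \<Rightarrow> real" where
  "quad_grad_p a b d z = 2 * a * fst z + b * snd z + d"

definition quad_grad_q :: "real \<Rightarrow> real \<Rightarrow> real \<Rightarrow> real \<times> real \<Rightarrow> real" where
  "quad_grad_q b c e z = b * fst z + 2 * c * snd z + e"

definition quad_crit :: "real \<Rightarrow> real \<Rightarrow> real \<Rightarrow> real \<Rightarrow> real \<Rightarrow> real \<times> real" where
  "quad_crit a b c d e =
     (let p = - (2 * c * d - b * e) / (4 * a * c - b ^ 2) in (p, - (b * p + e) / (2 * c)))"

lemma quad_fun_shift: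
  "quad_fun a b c d e f (p + s, q + t) =
     quad_fun a b c d e f (p, q) + quad_grad_p a b d (p, q) * s + quad_grad_q b c e (p, q) * t
     + (a * s ^ 2 + b * s * t + c * t ^ 2)"
  by (simp add: quad_fun_def quad_grad_p_def quad_grad_q_def algebra_simps power2_eq_square)

lemma quadratic_form_nonpos:
  fixes a b c s t :: real
  assumes "a < 0" "4 * a * c - b ^ 2 > 0"
  shows "a * s ^ 2 + b * s * t + c * t ^ 2 \<le> 0"
proof -
  have "4 * a * (a * s ^ 2 + b * s * t + c * t ^ 2)
      = (2 * a * s + b * t) ^ 2 + (4 * a * c - b ^ 2) * t ^ 2"
    by (simp add: power2_eq_square algebra_simps)
  also have "\<dots> \<ge> 0"
    using assms by simp
  finally show ?thesis
    using assms(1) by (simp add: zero_le_mult_iff)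
qed

lemma quad_grad_combination:
  "b * quad_grad_q b c e z - 2 * c * quad_grad_p a b d z
     = - (4 * a * c - b ^ 2) * fst z - (2 * c * d - b * e)"
  by (simp add: quad_grad_p_def quad_grad_q_def algebra_simps power2_eq_square)

lemma quad_grad_zero_iff_crit:
  assumes "c \<noteq> 0" "4 * a * c - b ^ 2 \<noteq> 0"
  shows "quad_grad_p a b d z = 0 \<and> quad_grad_q b c e z = 0 \<longleftrightarrow> z = quad_crit a b c d e"
proof -
  have "quad_grad_q b c e z = 0 \<longleftrightarrow> snd z = - (b * fst z + e) / (2 * c)"
    using assms(1) by (auto simp: quad_grad_q_def field_simps)
  moreover have "quad_grad_p a b d z = 0 \<longleftrightarrow> fst z = - (2 * c * d - b * e) / (4 * a * c - b ^ 2)"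
    if "quad_grad_q b c e z = 0"
  proof -
    have "2 * c * quad_grad_p a b d z = (4 * a * c - b ^ 2) * fst z + (2 * c * d - b * e)"
      using quad_grad_combination[of b c e z a d] that by (simp add: algebra_simps)
    then show ?thesis
      using assms by (auto simp: field_simps)
  qed
  ultimately show ?thesis
    by (cases z) (auto simp: quad_crit_def Let_def)
qed

lemma quad_fun_le_crit:
  fixes a b c d e f :: real
  assumes "a < 0" "4 * a * c - b ^ 2 > 0"
  shows "quad_fun a b c d e f z \<le> quad_fun a b c d e f (quad_crit a b c d e)"
proof -
  obtain p q where crit: "quad_crit a b c d e = (p, q)"
    by fastforce
  have "c \<noteq> 0"
    using assms by auto
  then have "quad_grad_p a b d (p, q) = 0 \<and> quad_grad_q b c e (p, q) = 0"
    using quad_grad_zero_iff_crit[of c a b d "(p, q)" e] assms crit by simp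
  then have "quad_fun a b c d e f (p + (fst z - p), q + (snd z - q)) \<le> quad_fun a b c d e f (p, q)"
    unfolding quad_fun_shift using quadratic_form_nonpos[OF assms] by simp
  then show ?thesis
    by (simp add: crit)
qed

lemma slope_nonpos_of_one_sided_max:
  fixes g w e :: real
  assumes "e > 0" and max: "\<And>t. 0 < t \<Longrightarrow> t < e \<Longrightarrow> g * t + w * t ^ 2 \<le> 0"
  shows "g \<le> 0"
proof (rule ccontr)
  assume "\<not> g \<le> 0"
  define t where "t = min (e / 2) (g / (2 * \<bar>w\<bar> + 1))"
  have "0 < t" "t < e"
    using \<open>\<not> g \<le> 0\<close> assms(1) by (auto simp: t_def)
  have "t * (2 * \<bar>w\<bar> + 1) \<le> g"
    using \<open>\<not> g \<le> 0\<close> by (simp add: t_def min_def pos_le_divide_eq mult.commute)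
  moreover have "\<bar>w * t\<bar> = \<bar>w\<bar> * t"
    using \<open>0 < t\<close> by (simp add: abs_mult)
  then have "- (\<bar>w\<bar> * t) \<le> w * t" "0 \<le> \<bar>w\<bar> * t"
    using abs_ge_minus_self[of "w * t"] abs_ge_zero[of "w * t"] by linarith+
  moreover have "t * (2 * \<bar>w\<bar> + 1) = 2 * (\<bar>w\<bar> * t) + t"
    by (simp add: algebra_simps)
  ultimately have "0 < g + w * t"
    using \<open>0 < t\<close> by linarith
  then have "0 < t * (g + w * t)"
    using \<open>0 < t\<close> by simp
  then show False
    using max[OF \<open>0 < t\<close> \<open>t < e\<close>] by (simp add: algebra_simps power2_eq_square)
qed

lemma quad_fun_max_on_quadrant:
  fixes r p q :: real
  assumes "r > 0" "0 \<le> p" "0 \<le> q"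
    and max: "\<And>z. z \<in> ball (p, q) r \<Longrightarrow> 0 \<le> fst z \<Longrightarrow> 0 \<le> snd z \<Longrightarrow>
                quad_fun a b c d e f z \<le> quad_fun a b c d e f (p, q)"
  shows "quad_grad_p a b d (p, q) \<le> 0" "0 < p \<Longrightarrow> quad_grad_p a b d (p, q) = 0"
    and "quad_grad_q b c e (p, q) \<le> 0" "0 < q \<Longrightarrow> quad_grad_q b c e (p, q) = 0"
proof -
  let ?gp = "quad_grad_p a b d (p, q)" and ?gq = "quad_grad_q b c e (p, q)"
  have step_p: "?gp * t + a * t ^ 2 \<le> 0" if "\<bar>t\<bar> < r" "0 \<le> p + t" for t
  proof -
    have "(p + t, q) \<in> ball (p, q) r"
      using that by (simp add: dist_Pair_Pair dist_real_def)
    then have "quad_fun a b c d e f (p + t, q) \<le> quad_fun a b c d e f (p, q)"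
      using max that assms by simp
    then show ?thesis
      using quad_fun_shift[of a b c d e f p t q 0] by simp
  qed
  have step_q: "?gq * t + c * t ^ 2 \<le> 0" if "\<bar>t\<bar> < r" "0 \<le> q + t" for t
  proof -
    have "(p, q + t) \<in> ball (p, q) r"
      using that by (simp add: dist_Pair_Pair dist_real_def)
    then have "quad_fun a b c d e f (p, q + t) \<le> quad_fun a b c d e f (p, q)"
      using max that assms by simp
    then show ?thesis
      using quad_fun_shift[of a b c d e f p 0 q t] by simp
  qed
  show gp: "?gp \<le> 0"
    by (rule slope_nonpos_of_one_sided_max[where w = a, OF \<open>r > 0\<close>]) (use step_p assms in auto)
  show gq: "?gq \<le> 0"
    by (rule slope_nonpos_of_one_sided_max[where w = c, OF \<open>r > 0\<close>]) (use step_q assms in auto)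
  show "?gp = 0" if "0 < p"
  proof -
    have "- ?gp \<le> 0"
    proof (rule slope_nonpos_of_one_sided_max[where e = "min r p" and w = a])
      show "- ?gp * t + a * t ^ 2 \<le> 0" if "0 < t" "t < min r p" for t
        using step_p[of "- t"] that by simp
    qed (use assms that in simp)
    then show ?thesis
      using gp by simp
  qed
  show "?gq = 0" if "0 < q"
  proof -
    have "- ?gq \<le> 0"
    proof (rule slope_nonpos_of_one_sided_max[where e = "min r q" and w = c])
      show "- ?gq * t + c * t ^ 2 \<le> 0" if "0 < t" "t < min r q" for t
        using step_q[of "- t"] that by simp
    qed (use assms that in simp)
    then show ?thesis
      using gq by simp
  qed
qed

lemma Max_max0_pieces:
  fixes f :: "'a \<Rightarrow> real"
  assumes "finite I" "i \<in> I" "z \<in> S \<inter> A i" "\<forall>w\<in>S. f w \<le> f z" "0 \<le> f z"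
  shows "Max ((\<lambda>l. max0 f (S \<inter> A l)) ` I) = f z"
proof (rule Max_eqI)
  show "finite ((\<lambda>l. max0 f (S \<inter> A l)) ` I)"
    using assms(1) by simp
  show "y \<le> f z" if "y \<in> (\<lambda>l. max0 f (S \<inter> A l)) ` I" for y
    using that assms(4,5) by (auto simp: max0_def intro!: cSup_least)
  have "max0 f (S \<inter> A i) = f z"
    using assms(3,4) by (auto simp: max0_def intro!: cSup_eq_maximum)
  then show "f z \<in> (\<lambda>l. max0 f (S \<inter> A l)) ` I"
    using assms(2) by (metis image_eqI)
qed

section \<open>The co-existence region and the coalition utility\<close>

locale coexistence_game =
  fixes di dj ai aj eps Ci Cj CS Oi Oj OS :: real
  assumes pos: "di > 0" "dj > 0" "ai > 0" "aj > 0"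
    and eps_range: "0 < eps" "eps \<le> 1"
    and costs: "Ci \<ge> 0" "Cj \<ge> 0" "CS \<ge> 0" "Oi \<ge> 0" "Oj \<ge> 0" "OS \<ge> 0"
    and A1: "di \<ge> ai * (CS + Ci) + 2 * sqrt (ai * (OS + Oi))"
            "dj \<ge> aj * (CS + Cj) + 2 * max (sqrt (2 * aj * (OS + Oi))) (sqrt (aj * Oj))"
    and A2: "eps * (aj * Ci) \<le> 2 * sqrt (aj * Oj)"
begin

abbreviation "F \<equiv> Fco_plus di dj ai aj eps Cj Oj"
abbreviation "U \<equiv> UV di dj ai aj eps Ci Cj CS Oi Oj OS"
abbreviation "W1 \<equiv> w1 ai eps"
abbreviation "W2 \<equiv> w2 ai aj eps"
abbreviation "W3 \<equiv> w3 aj"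
abbreviation "W4 \<equiv> w4 di dj ai aj eps Ci Cj CS"
abbreviation "W5 \<equiv> w5 dj aj eps Ci Cj CS"

definition theta_lin :: "real \<Rightarrow> real" where
  "theta_lin p = (dj + eps * ai * p - aj * Cj - 2 * sqrt (aj * Oj)) / aj"

definition pt_free :: "real \<Rightarrow> real \<Rightarrow> real" where
  "pt_free p q = (dj + eps * ai * p) / (2 * aj) + (Cj + q) / 2"

definition demand_i :: "real \<Rightarrow> real \<Rightarrow> real" where
  "demand_i p q = di - ai * p + eps * aj * pt_free p q"

definition demand_j :: "real \<Rightarrow> real \<Rightarrow> real" where
  "demand_j p q = dj + eps * ai * p - aj * pt_free p q"

definition U_free :: "real \<times> real \<Rightarrow> real" where
  "U_free z = demand_i (fst z) (snd z) * (fst z - Ci - CS)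
     + demand_j (fst z) (snd z) * (snd z - CS) - Oi - OS"

lemma sqrt_aj_Oj: "0 \<le> sqrt (aj * Oj)" "sqrt (aj * Oj) ^ 2 = aj * Oj"
  using pos costs by simp_all

lemma min_theta_phi:
  "min (theta di dj ai aj eps Cj Oj p) (phi di dj ai aj eps Cj p)
     = min (theta_lin p) (phi di dj ai aj eps Cj p)"
proof (cases "p < p_sw di ai aj eps Oj")
  case True
  then show ?thesis
    by (simp add: theta_def theta_lin_def)
next
  case False
  \<comment> \<open>beyond p_sw, phi lies below both branches\<close>
  define s where "s = sqrt (aj * Oj)"
  define x where "x = eps * ai * p - eps * di"
  define c where "c = (dj + eps * di - aj * Cj) / aj"
  have "s \<le> x"
  proof -
    have "eps * ai * (di / ai + s / (eps * ai)) \<le> eps * ai * p"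
      using False pos eps_range by (intro mult_left_mono) (auto simp: p_sw_def s_def)
    moreover have "eps * ai * (di / ai + s / (eps * ai)) = eps * di + s"
      using pos eps_range by (simp add: field_simps)
    ultimately show ?thesis
      by (simp add: x_def)
  qed
  have "0 \<le> s" "s ^ 2 = aj * Oj"
    using sqrt_aj_Oj by (simp_all add: s_def)
  have "aj * Oj / (aj * x) \<le> x / aj"
  proof (cases "x = 0")
    case False
    then have "x > 0"
      using \<open>s \<le> x\<close> \<open>0 \<le> s\<close> by linarith
    have "s * s \<le> x * x"
      using \<open>s \<le> x\<close> \<open>0 \<le> s\<close> by (intro mult_mono) auto
    then show ?thesis
      using \<open>x > 0\<close> pos \<open>s ^ 2 = aj * Oj\<close> by (simp add: field_simps power2_eq_square)
  qed simp \<comment> \<open>for x = 0 the left side is 0 by division by zero\<close>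
  moreover have "theta di dj ai aj eps Cj Oj p = c - aj * Oj / (aj * x)"
    using False by (simp add: theta_def c_def x_def)
  moreover have "phi di dj ai aj eps Cj p = c - x / aj"
    using pos by (simp add: phi_def c_def x_def field_simps)
  moreover have "theta_lin p = c + (x - 2 * s) / aj"
    using pos by (simp add: theta_lin_def c_def x_def s_def field_simps)
  moreover have "- x / aj \<le> (x - 2 * s) / aj"
    using divide_right_mono[of "- x" "x - 2 * s" aj] \<open>s \<le> x\<close> pos by simp
  ultimately show ?thesis
    by simp
qed

lemma psi_denominator_pos: "(2 - eps ^ 2) * ai > 0"
  using power_le_one[of eps 2] eps_range pos by simp

lemma dj_lower_bound: "aj * (CS + Cj) + 2 * sqrt (aj * Oj) \<le> dj"
  using A1(2) max.cobounded2[of "sqrt (2 * aj * (OS + Oi))" "sqrt (aj * Oj)"] by linarith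

lemma mem_F_iff:
  "(p, q) \<in> F \<longleftrightarrow> 0 \<le> p \<and> 0 \<le> q \<and> p \<le> p_mx di dj ai aj eps
     \<and> p \<le> psi di dj ai aj eps Cj q \<and> q \<le> theta_lin p \<and> q \<le> phi di dj ai aj eps Cj p"
  using min_theta_phi[of p] by (auto simp: Fco_plus_def simp del: min_theta_phi)

lemma pt_star_eq_pt_free:
  assumes "q \<le> phi di dj ai aj eps Cj p"
  shows "pt_star di dj ai aj eps Cj p q = pt_free p q"
proof -
  have "q * aj \<le> dj + 2 * eps * di - eps * ai * p - aj * Cj"
    using assms pos by (simp add: phi_def pos_le_divide_eq)
  then have "dj + eps * ai * p + aj * (Cj + q) \<le> 2 * (dj + eps * di)"
    by (simp add: algebra_simps)
  then have "(dj + eps * ai * p + aj * (Cj + q)) / (2 * aj) \<le> 2 * (dj + eps * di) / (2 * aj)"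
    using pos by (intro divide_right_mono) auto
  then have "pt_free p q \<le> pt_mx di dj ai aj eps"
    using pos by (simp add: pt_free_def pt_mx_def add_divide_distrib)
  then show ?thesis
    by (simp add: pt_star_def pt_free_def)
qed

lemma demand_i_nonneg:
  assumes "p \<le> psi di dj ai aj eps Cj q"
  shows "0 \<le> demand_i p q"
proof -
  have "p * ((2 - eps ^ 2) * ai) \<le> 2 * di + eps * dj + eps * aj * (Cj + q)"
    using assms psi_denominator_pos by (simp add: psi_def pos_le_divide_eq)
  moreover have "2 * demand_i p q
      = 2 * di + eps * dj + eps * aj * (Cj + q) - p * ((2 - eps ^ 2) * ai)"
    using pos by (simp add: demand_i_def pt_free_def field_simps power2_eq_square)
  ultimately show ?thesis
    by linarith
qed

lemma demand_j_nonneg: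
  assumes "q \<le> theta_lin p"
  shows "0 \<le> demand_j p q"
proof -
  have "q * aj \<le> dj + eps * ai * p - aj * Cj - 2 * sqrt (aj * Oj)"
    using assms pos by (simp add: theta_lin_def pos_le_divide_eq)
  moreover have "2 * demand_j p q = dj + eps * ai * p - aj * Cj - q * aj"
    using pos by (simp add: demand_j_def pt_free_def field_simps)
  ultimately show ?thesis
    using sqrt_aj_Oj(1) by linarith
qed

lemma UV_eq_U_free:
  assumes "z \<in> F"
  shows "U z = U_free z"
proof -
  obtain p q where z: "z = (p, q)"
    by fastforce
  then show ?thesis
    using assms pt_star_eq_pt_free demand_i_nonneg demand_j_nonneg
    by (simp add: mem_F_iff UV_def U_free_def pos_part_def demand_i_def demand_j_def Let_def)
qed

lemma U_free_quadratic: "U_free z = quad_fun W1 W2 W3 W4 W5 (U_free (0, 0)) z"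
  using pos
  by (simp add: U_free_def demand_i_def demand_j_def pt_free_def quad_fun_def
      w1_def w2_def w3_def w4_def w5_def field_simps power2_eq_square)

lemma compact_F: "compact F"
proof -
  define G where "G = {z. 0 \<le> fst z \<and> 0 \<le> snd z \<and> fst z \<le> p_mx di dj ai aj eps
     \<and> fst z \<le> psi di dj ai aj eps Cj (snd z) \<and> snd z \<le> theta_lin (fst z)
     \<and> snd z \<le> phi di dj ai aj eps Cj (fst z)}"
  have "F = G"
    using mem_F_iff by (auto simp: G_def)
  have "closed G"
    unfolding G_def theta_lin_def phi_def psi_def
    by (intro closed_Collect_conj closed_Collect_le continuous_intros)
      (use psi_denominator_pos pos in auto)
  moreover have "G \<subseteq> {0..p_mx di dj ai aj eps} \<times> {0..phi di dj ai aj eps Cj 0}"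
  proof
    fix z
    assume "z \<in> G"
    moreover have "phi di dj ai aj eps Cj (fst z) \<le> phi di dj ai aj eps Cj 0" if "0 \<le> fst z"
      using that eps_range pos by (simp add: phi_def divide_right_mono)
    ultimately show "z \<in> {0..p_mx di dj ai aj eps} \<times> {0..phi di dj ai aj eps Cj 0}"
      by (cases z) (auto simp: G_def)
  qed
  moreover have "compact ({0..p_mx di dj ai aj eps} \<times> {0..phi di dj ai aj eps Cj 0})"
    by (intro compact_Times compact_Icc)
  ultimately have "compact ({0..p_mx di dj ai aj eps} \<times> {0..phi di dj ai aj eps Cj 0} \<inter> G)"
    using compact_Int_closed by blast
  then show ?thesis
    using \<open>F = G\<close> \<open>G \<subseteq> _\<close> by (simp add: Int_absorb1)
qed

text \<open>At the price p_base and the wholesale price C_S, the margin of M_i over its unit cost is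
  sqrt(ai (OS + Oi)) / ai while by (A.1) its demand is at least sqrt(ai (OS + Oi)), so the
  coalition recovers its operating costs: U_V >= 0 there. This makes the convention that the
  maximum over an empty set is 0 harmless.\<close>

definition p_base :: real where
  "p_base = Ci + CS + sqrt (ai * (OS + Oi)) / ai"

lemma ai_p_base: "ai * p_base = ai * (CS + Ci) + sqrt (ai * (OS + Oi))"
  using pos by (simp add: p_base_def field_simps)

lemma base_point_mem: "(p_base, CS) \<in> F"
proof -
  let ?r = "sqrt (ai * (OS + Oi))"
  have "0 \<le> ?r" "0 \<le> p_base"
    using pos costs by (simp_all add: p_base_def)
  have "ai * p_base \<le> di"
    using ai_p_base A1(1) \<open>0 \<le> ?r\<close> by linarith
  have "0 \<le> eps * (ai * p_base)" "eps * (ai * p_base) \<le> eps * di"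
    using \<open>ai * p_base \<le> di\<close> \<open>0 \<le> p_base\<close> eps_range pos by (simp_all add: mult_left_mono)
  have "p_base * ai \<le> di + eps * dj"
    using \<open>ai * p_base \<le> di\<close> eps_range pos by (simp add: mult.commute add_increasing2)
  then have "p_base \<le> p_mx di dj ai aj eps"
    using pos by (simp add: p_mx_def pos_le_divide_eq)
  moreover have "p_base \<le> psi di dj ai aj eps Cj CS"
  proof -
    have "p_base * ((2 - eps ^ 2) * ai) \<le> 2 * (ai * p_base)"
      using \<open>0 \<le> p_base\<close> pos by (simp add: algebra_simps)
    also have "\<dots> \<le> 2 * di + eps * dj + eps * aj * (Cj + CS)"
    proof -
      have "0 \<le> eps * dj + eps * aj * (Cj + CS)"
        using eps_range pos costs by simp
      then show ?thesis
        using \<open>ai * p_base \<le> di\<close> by linarith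
    qed
    finally show ?thesis
      using psi_denominator_pos by (simp add: psi_def pos_le_divide_eq)
  qed
  moreover have "CS \<le> theta_lin p_base"
    using dj_lower_bound \<open>0 \<le> eps * (ai * p_base)\<close> pos
    by (simp add: theta_lin_def pos_le_divide_eq algebra_simps)
  moreover have "CS \<le> phi di dj ai aj eps Cj p_base"
  proof -
    have "aj * CS + aj * Cj + 2 * sqrt (aj * Oj) \<le> dj"
      using dj_lower_bound by (simp add: distrib_left)
    moreover have "0 \<le> eps * di"
      using eps_range pos by simp
    ultimately have "aj * CS \<le> dj + 2 * (eps * di) - eps * (ai * p_base) - aj * Cj"
      using \<open>eps * (ai * p_base) \<le> eps * di\<close> sqrt_aj_Oj(1) by linarith
    then show ?thesis
      using pos by (simp add: phi_def pos_le_divide_eq ac_simps)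
  qed
  ultimately show ?thesis
    using \<open>0 \<le> p_base\<close> costs by (simp add: mem_F_iff)
qed

lemma base_point_nonneg: "0 \<le> U (p_base, CS)"
proof -
  let ?r = "sqrt (ai * (OS + Oi))"
  have "0 \<le> ?r" "?r * ?r = ai * (OS + Oi)"
    using pos costs by simp_all
  have "0 \<le> p_base"
    using pos costs by (simp add: p_base_def)
  then have "0 \<le> eps * aj * pt_free p_base CS"
    using eps_range pos costs by (simp add: pt_free_def)
  then have "?r \<le> demand_i p_base CS"
    using ai_p_base A1(1) by (simp add: demand_i_def)
  then have "?r * (?r / ai) \<le> demand_i p_base CS * (?r / ai)"
    using \<open>0 \<le> ?r\<close> pos by (intro mult_right_mono) auto
  moreover have "?r * (?r / ai) = OS + Oi"
    using \<open>?r * ?r = ai * (OS + Oi)\<close> pos by (simp add: field_simps)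
  moreover have "U (p_base, CS) = demand_i p_base CS * (?r / ai) - Oi - OS"
    using UV_eq_U_free[OF base_point_mem] by (simp add: U_free_def p_base_def)
  ultimately show ?thesis
    by linarith
qed

lemma coefficient_signs: "W1 < 0" "0 < W2" "W3 < 0"
proof -
  have "eps ^ 2 \<le> 1"
    using power_le_one[of eps 2] eps_range by simp
  then show "W1 < 0" "0 < W2" "W3 < 0"
    using eps_range pos by (simp_all add: w1_def w2_def w3_def)
qed

lemma w4_pos: "0 < W4"
proof -
  have "eps ^ 2 \<le> eps"
    using eps_range by (simp add: power2_eq_square mult_left_le_one_le)
  then have "0 \<le> ai * CS * (2 - eps ^ 2 - eps)" "0 \<le> ai * Ci * (2 - eps ^ 2)"
    using eps_range pos costs by simp_all
  moreover have "0 \<le> eps * dj + eps * aj * Cj"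
    using eps_range pos costs by simp
  moreover have "2 * W4 = 2 * di + (eps * dj + eps * aj * Cj) + ai * CS * (2 - eps ^ 2 - eps)
      + ai * Ci * (2 - eps ^ 2)"
    by (simp add: w4_def field_simps)
  ultimately show ?thesis
    using pos by linarith
qed

lemma w5_nonneg: "0 \<le> W5"
proof -
  have "2 * W5 = (dj - aj * (CS + Cj) - 2 * sqrt (aj * Oj))
      + (2 * sqrt (aj * Oj) - eps * (aj * Ci)) + aj * CS * (2 - eps)"
    by (simp add: w5_def field_simps)
  moreover have "0 \<le> aj * CS * (2 - eps)"
    using eps_range pos costs by simp
  ultimately show ?thesis
    using dj_lower_bound A2 by linarith
qed

lemma crit_numerator_neg: "2 * W3 * W4 - W2 * W5 < 0"
proof -
  have "0 < aj * W4" "0 \<le> W2 * W5"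
    using coefficient_signs w4_pos w5_nonneg pos by simp_all
  then show ?thesis
    by (simp add: w3_def)
qed

abbreviation "co_point \<equiv> (p_co di dj ai aj eps Ci Cj CS, q_co di dj ai aj eps Ci Cj CS)"

lemma co_point_eq_quad_crit: "co_point = quad_crit W1 W2 W3 W4 W5"
  by (simp add: p_co_def q_co_def quad_crit_def Let_def)

lemma quadrant_max_is_co_point:
  assumes "r > 0" "0 \<le> p" "0 \<le> q"
    and max: "\<And>z. z \<in> ball (p, q) r \<Longrightarrow> 0 \<le> fst z \<Longrightarrow> 0 \<le> snd z \<Longrightarrow>
                U_free z \<le> U_free (p, q)"
  shows "0 < p" "0 < q" "(p, q) = co_point"
proof -
  note kkt = quad_fun_max_on_quadrant[OF assms(1-3), of W1 W2 W3 W4 W5 "U_free (0, 0)"]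
  have gp: "quad_grad_p W1 W2 W4 (p, q) \<le> 0" "0 < p \<Longrightarrow> quad_grad_p W1 W2 W4 (p, q) = 0"
    and gq: "quad_grad_q W2 W3 W5 (p, q) \<le> 0" "0 < q \<Longrightarrow> quad_grad_q W2 W3 W5 (p, q) = 0"
    using kkt max by (simp_all flip: U_free_quadratic)
  show "0 < p"
  proof (rule ccontr)
    assume "\<not> 0 < p"
    then have "quad_grad_p W1 W2 W4 (p, q) = W2 * q + W4"
      using assms(2) by (simp add: quad_grad_p_def)
    moreover have "0 \<le> W2 * q"
      using coefficient_signs(2) assms(3) by simp
    ultimately show False
      using gp(1) w4_pos by linarith
  qed
  show "0 < q"
  proof (rule ccontr)
    assume "\<not> 0 < q"
    then have "quad_grad_q W2 W3 W5 (p, q) = W2 * p + W5"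
      using assms(3) by (simp add: quad_grad_q_def)
    moreover have "0 < W2 * p"
      using coefficient_signs(2) \<open>0 < p\<close> by simp
    ultimately show False
      using gq(1) w5_nonneg by linarith
  qed
  have "quad_grad_p W1 W2 W4 (p, q) = 0" "quad_grad_q W2 W3 W5 (p, q) = 0"
    using gp(2) gq(2) \<open>0 < p\<close> \<open>0 < q\<close> by simp_all
  then have "(4 * W1 * W3 - W2 ^ 2) * p = - (2 * W3 * W4 - W2 * W5)"
    using quad_grad_combination[of W2 W3 W5 "(p, q)" W1 W4] by (simp add: algebra_simps)
  then have "4 * W1 * W3 - W2 ^ 2 \<noteq> 0"
    using crit_numerator_neg by auto
  then show "(p, q) = co_point"
    using quad_grad_zero_iff_crit[of W3 W1 W2 W4 "(p, q)" W5] coefficient_signs(3)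
      \<open>quad_grad_p W1 W2 W4 (p, q) = 0\<close> \<open>quad_grad_q W2 W3 W5 (p, q) = 0\<close>
    by (simp add: co_point_eq_quad_crit)
qed

lemma co_point_max_if_interior:
  assumes "co_point \<in> interior F"
  shows "co_point \<in> F" "\<forall>z\<in>F. U z \<le> U co_point"
proof -
  show "co_point \<in> F"
    using assms interior_subset by blast
  obtain r where "0 < r" "ball co_point r \<subseteq> F"
    using assms mem_interior by blast
  moreover have "(p_co di dj ai aj eps Ci Cj CS - r / 2, q_co di dj ai aj eps Ci Cj CS)
      \<in> ball co_point r"
    using \<open>0 < r\<close> by (simp add: dist_Pair_Pair dist_real_def)
  ultimately have "0 < p_co di dj ai aj eps Ci Cj CS"
    using mem_F_iff by force
  then have "0 < 4 * W1 * W3 - W2 ^ 2"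
    using crit_numerator_neg by (auto simp: p_co_def zero_less_divide_iff)
  then have "quad_fun W1 W2 W3 W4 W5 (U_free (0, 0)) z
      \<le> quad_fun W1 W2 W3 W4 W5 (U_free (0, 0)) co_point" for z
    using quad_fun_le_crit coefficient_signs(1) by (simp add: co_point_eq_quad_crit)
  then show "\<forall>z\<in>F. U z \<le> U co_point"
    using UV_eq_U_free \<open>co_point \<in> F\<close> by (simp flip: U_free_quadratic)
qed

lemma exists_maximizer: "\<exists>z\<in>F. \<forall>w\<in>F. U w \<le> U z"
proof -
  have "continuous_on F U_free"
    using pos unfolding U_free_def demand_i_def demand_j_def pt_free_def
    by (intro continuous_intros) auto
  then have "continuous_on F U"
    using UV_eq_U_free continuous_on_cong by blast
  then show ?thesis
    using continuous_attains_sup[OF compact_F] base_point_mem by blast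
qed

lemma maximizer_on_Line:
  assumes "z \<in> F" "\<forall>w\<in>F. U w \<le> U z" "co_point \<notin> interior F"
  shows "\<exists>l\<in>{1..4}. z \<in> Line di dj ai aj eps Cj Oj l"
proof (rule ccontr)
  assume off_lines: "\<not> ?thesis"
  obtain p q where z: "z = (p, q)"
    by fastforce
  define S where "S = {w. fst w < p_mx di dj ai aj eps \<and> fst w < psi di dj ai aj eps Cj (snd w)
     \<and> snd w < theta_lin (fst w) \<and> snd w < phi di dj ai aj eps Cj (fst w)}"
  have "open S"
    unfolding S_def theta_lin_def phi_def psi_def
    by (intro open_Collect_conj open_Collect_less continuous_intros)
      (use psi_denominator_pos pos in auto)
  have "z \<notin> Line di dj ai aj eps Cj Oj 1" "z \<notin> Line di dj ai aj eps Cj Oj 2"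
    "z \<notin> Line di dj ai aj eps Cj Oj 3" "z \<notin> Line di dj ai aj eps Cj Oj 4"
    using off_lines by simp_all
  then have "q \<noteq> phi di dj ai aj eps Cj p" "p \<noteq> psi di dj ai aj eps Cj q" "q \<noteq> theta_lin p"
    "p \<noteq> p_mx di dj ai aj eps"
    by (simp_all add: z Line_def theta_lin_def)
  then have "z \<in> S"
    using assms(1) by (auto simp: z S_def mem_F_iff)
  have S_F: "w \<in> F" if "w \<in> S" "0 \<le> fst w" "0 \<le> snd w" for w
    using that mem_F_iff[of "fst w" "snd w"] by (simp add: S_def)
  obtain r where "0 < r" "ball z r \<subseteq> S"
    using \<open>open S\<close> \<open>z \<in> S\<close> open_contains_ball by blast
  have "0 \<le> p" "0 \<le> q"
    using assms(1) by (simp_all add: z mem_F_iff)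
  moreover have "U_free w \<le> U_free (p, q)" if "w \<in> ball (p, q) r" "0 \<le> fst w" "0 \<le> snd w" for w
  proof -
    have "w \<in> F"
      using that S_F \<open>ball z r \<subseteq> S\<close> z by blast
    then show ?thesis
      using assms(1,2) UV_eq_U_free[of w] UV_eq_U_free[of z] z by metis
  qed
  ultimately have "0 < p" "0 < q" "z = co_point"
    using quadrant_max_is_co_point[OF \<open>0 < r\<close>] z by blast+
  have "S \<inter> {w. 0 < fst w \<and> 0 < snd w} \<subseteq> F"
    using S_F by auto
  moreover have "open (S \<inter> {w. 0 < fst w \<and> 0 < snd w})"
    using \<open>open S\<close> by (intro open_Int open_Collect_conj open_Collect_less continuous_intros)
  ultimately have "z \<in> interior F"
    using \<open>z \<in> S\<close> \<open>0 < p\<close> \<open>0 < q\<close> z interiorI by fastforce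
  then show False
    using assms(3) \<open>z = co_point\<close> by simp
qed

end

theorem theorem1:
  fixes di dj ai aj eps Ci Cj CS Oi Oj OS :: real
  assumes pos: "di > 0" "dj > 0" "ai > 0" "aj > 0"
    and eps: "0 < eps" "eps \<le> 1"
    and costs: "Ci \<ge> 0" "Cj \<ge> 0" "CS \<ge> 0" "Oi \<ge> 0" "Oj \<ge> 0" "OS \<ge> 0"
    and A1: "di \<ge> ai * (CS + Ci) + 2 * sqrt (ai * (OS + Oi))"
            "dj \<ge> aj * (CS + Cj) + 2 * max (sqrt (2 * aj * (OS + Oi))) (sqrt (aj * Oj))"
    and A2: "eps * (aj * Ci) \<le> 2 * sqrt (aj * Oj)"
  shows
    "(let F = Fco_plus di dj ai aj eps Cj Oj;
          U = UV di dj ai aj eps Ci Cj CS Oi Oj OS;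
          zs = (p_co di dj ai aj eps Ci Cj CS, q_co di dj ai aj eps Ci Cj CS)
      in (zs \<in> interior F \<longrightarrow> zs \<in> F \<and> (\<forall>z\<in>F. U z \<le> U zs))
       \<and> (zs \<notin> interior F \<longrightarrow>
            (\<exists>z\<in>F. (\<forall>w\<in>F. U w \<le> U z)
               \<and> U z = Max ((\<lambda>l. max0 U (F \<inter> Line di dj ai aj eps Cj Oj l)) ` {1..4}))))"
proof -
  interpret coexistence_game di dj ai aj eps Ci Cj CS Oi Oj OS
    using assms by unfold_locales
  have "\<exists>z\<in>F. (\<forall>w\<in>F. U w \<le> U z)
      \<and> U z = Max ((\<lambda>l. max0 U (F \<inter> Line di dj ai aj eps Cj Oj l)) ` {1..4})"
    if not_interior: "co_point \<notin> interior F"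
  proof -
    obtain z where z: "z \<in> F" "\<forall>w\<in>F. U w \<le> U z"
      using exists_maximizer by blast
    then obtain l where "l \<in> {1..4}" "z \<in> Line di dj ai aj eps Cj Oj l"
      using maximizer_on_Line not_interior by blast
    moreover have "0 \<le> U z"
      using z base_point_mem base_point_nonneg by force
    ultimately show ?thesis
      using z Max_max0_pieces[of "{1..4}" l z F] by auto
  qed
  then show ?thesis
    using co_point_max_if_interior by (simp add: Let_def)
qed

end
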